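(* Let $N\ge2$, $U=-e^{2\pi i/N}\begin{pmatrix}1/2&-\sqrt{3}/2\\ \sqrt3/2&1/2\end{pmatrix}$, and $|\psi_i\rangle=(U^i|0\rangle)^{\otimes N}$ for $i=0,1,2$, each with prior $1/3$. With $\alpha=\tfrac13\big(1-(-\tfrac12)^{N-1}\big)$, the optimal minimum-error success probability for this ensemble equals $\big(\sqrt{2/3}\sqrt{1-\alpha}+\sqrt{1/3}\sqrt{\alpha}\big)^2$, which tends to $1$ as $N\to\infty$.
   Context: The optimal minimum-error success probability of an ensemble $\{|\psi_i\rangle,p_i\}_{i=0}^2$ is the maximum over all three-outcome POVMs $\{\Pi_i\}$ on $(\mathbb{C}^2)^{\otimes N}$ of $\sum_ip_i\langle\psi_i|\Pi_i|\psi_i\rangle$. *)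

theory Defs
  imports Complex_Main "Jordan_Normal_Form.Matrix"
begin

definition ket0 :: "complex vec" where
  "ket0 = vec 2 (\<lambda>j. if j = 0 then 1 else 0)"

definition Umat :: "nat \<Rightarrow> complex mat" where
  "Umat N = (- cis (2 * pi / real N)) \<cdot>\<^sub>m
     mat_of_rows_list 2 [[complex_of_real (1/2), complex_of_real (- sqrt 3 / 2)],
                         [complex_of_real (sqrt 3 / 2), complex_of_real (1/2)]]"

text \<open>N-fold tensor power of a qubit vector, as a vector of dimension 2^N in the
  computational basis: the entry at index j is the product over the N qubits k of
  the entry of v at the k-th binary digit of j.\<close>
definition tensor_pow :: "complex vec \<Rightarrow> nat \<Rightarrow> complex vec" where
  "tensor_pow v N = vec (2 ^ N) (\<lambda>j. \<Prod>k<N. v $ ((j div 2 ^ k) mod 2))"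

definition psi :: "nat \<Rightarrow> nat \<Rightarrow> complex vec" where
  "psi N i = tensor_pow ((Umat N ^\<^sub>m i) *\<^sub>v ket0) N"

definition psd :: "nat \<Rightarrow> complex mat \<Rightarrow> bool" where
  "psd d P \<longleftrightarrow> P \<in> carrier_mat d d \<and>
     (\<forall>i<d. \<forall>j<d. P $$ (i, j) = cnj (P $$ (j, i))) \<and>
     (\<forall>v \<in> carrier_vec d. Re (conjugate v \<bullet> (P *\<^sub>v v)) \<ge> 0)"

definition povm3 :: "nat \<Rightarrow> (nat \<Rightarrow> complex mat) \<Rightarrow> bool" where
  "povm3 d M \<longleftrightarrow> (\<forall>i<3. psd d (M i)) \<and> M 0 + M 1 + M 2 = 1\<^sub>m d"

text \<open>Success probability sum_i p_i <psi_i|Pi_i|psi_i> (real since Pi_i is PSD).\<close>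
definition success :: "(nat \<Rightarrow> real) \<Rightarrow> (nat \<Rightarrow> complex vec) \<Rightarrow> (nat \<Rightarrow> complex mat) \<Rightarrow> real" where
  "success p \<psi> M = (\<Sum>i<3. p i * Re (conjugate (\<psi> i) \<bullet> (M i *\<^sub>v \<psi> i)))"

definition opt_success :: "nat \<Rightarrow> (nat \<Rightarrow> real) \<Rightarrow> (nat \<Rightarrow> complex vec) \<Rightarrow> real" where
  "opt_success N p \<psi> = (SUP M \<in> {M. povm3 (2 ^ N) M}. success p \<psi> M)"

end

theory Submission
  imports Defs
begin

text \<open>The three states have unit norm and the same real pairwise overlap c = (-1/2)^N, so the
  Gram matrix is circulant: the Fourier combinations F_k of the states are orthogonal with squared
  norms 3(1+2c), 3(1-c), 3(1-c), and every state is a combination of the F_k with coefficients of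
  modulus 1/3. For a positive semidefinite POVM element P the weighted Cauchy--Schwarz inequality
  <x+y|P|x+y> \<le> (s+t)(<x|P|x>/s + <y|P|y>/t), applied with weights sqrt(1+2c), sqrt(1-c), sqrt(1-c),
  bounds <psi_i|P|psi_i> linearly in the <F_k|P|F_k>; summing over the POVM turns these into the
  norms of the F_k and gives the bound (sqrt(1+2c) + 2 sqrt(1-c))^2/9. Equality in Cauchy--Schwarz
  is reached by the rank one projections onto two orthonormal vectors adapted to psi_1 and psi_2,
  completed by the projection onto their orthogonal complement.\<close>

section \<open>Inner products and quadratic forms\<close>

definition braket :: "complex vec \<Rightarrow> complex vec \<Rightarrow> complex" where
  "braket v w = conjugate v \<bullet> w"

lemma braket_sum:
  "dim_vec v = n \<Longrightarrow> dim_vec w = n \<Longrightarrow> braket v w = (\<Sum>i<n. cnj (v $ i) * w $ i)"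
  unfolding braket_def scalar_prod_def conjugate_vec_def by (auto intro!: sum.cong)

lemma braket_add_left:
  "v \<in> carrier_vec n \<Longrightarrow> w \<in> carrier_vec n \<Longrightarrow> u \<in> carrier_vec n \<Longrightarrow>
    braket (v + w) u = braket v u + braket w u"
  by (simp add: braket_sum[of _ n] sum.distrib algebra_simps)

lemma braket_add_right:
  "v \<in> carrier_vec n \<Longrightarrow> w \<in> carrier_vec n \<Longrightarrow> u \<in> carrier_vec n \<Longrightarrow>
    braket u (v + w) = braket u v + braket u w"
  by (simp add: braket_sum[of _ n] sum.distrib algebra_simps)

lemma braket_smult_left:
  "v \<in> carrier_vec n \<Longrightarrow> u \<in> carrier_vec n \<Longrightarrow> braket (a \<cdot>\<^sub>v v) u = cnj a * braket v u"
  by (simp add: braket_sum[of _ n] sum_distrib_left algebra_simps)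

lemma braket_smult_right:
  "v \<in> carrier_vec n \<Longrightarrow> u \<in> carrier_vec n \<Longrightarrow> braket u (a \<cdot>\<^sub>v v) = a * braket u v"
  by (simp add: braket_sum[of _ n] sum_distrib_left algebra_simps)

lemma braket_diff_right:
  "v \<in> carrier_vec n \<Longrightarrow> w \<in> carrier_vec n \<Longrightarrow> u \<in> carrier_vec n \<Longrightarrow>
    braket u (v - w) = braket u v - braket u w"
  by (simp add: braket_sum[of _ n] sum_subtractf algebra_simps)

lemmas braket_linear =
  braket_add_left braket_add_right braket_diff_right braket_smult_left braket_smult_right

lemma braket_cnj: "u \<in> carrier_vec n \<Longrightarrow> v \<in> carrier_vec n \<Longrightarrow> braket u v = cnj (braket v u)"
  by (simp add: braket_sum[of _ n] algebra_simps)

lemma braket_self_Re_nonneg: "v \<in> carrier_vec n \<Longrightarrow> 0 \<le> Re (braket v v)"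
  by (simp add: braket_sum[of _ n] sum_nonneg)

definition qform :: "complex mat \<Rightarrow> complex vec \<Rightarrow> real" where
  "qform P v = Re (braket v (P *\<^sub>v v))"

lemma psd_carrier: "psd n P \<Longrightarrow> P \<in> carrier_mat n n"
  unfolding psd_def by simp

lemma psd_qform_nonneg: "psd n P \<Longrightarrow> v \<in> carrier_vec n \<Longrightarrow> 0 \<le> qform P v"
  unfolding psd_def qform_def braket_def by auto

lemma qform_smult:
  assumes "P \<in> carrier_mat n n" "x \<in> carrier_vec n"
  shows "qform P (a \<cdot>\<^sub>v x) = (cmod a)\<^sup>2 * qform P x"
proof -
  have "braket (a \<cdot>\<^sub>v x) (P *\<^sub>v (a \<cdot>\<^sub>v x)) = (cnj a * a) * braket x (P *\<^sub>v x)"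
    using assms by (simp add: mult_mat_vec braket_linear[of _ n])
  moreover have "cnj a * a = complex_of_real ((cmod a)\<^sup>2)"
    using complex_norm_square[of a] by (simp add: mult.commute)
  ultimately show ?thesis unfolding qform_def by simp
qed

lemma psd_qform_add_le:
  assumes P: "psd n P" and x: "x \<in> carrier_vec n" and y: "y \<in> carrier_vec n"
    and s: "s > 0" and t: "t > 0"
  shows "qform P (x + y) \<le> (s + t) * (qform P x / s + qform P y / t)"
proof -
  have Pc: "P \<in> carrier_mat n n" using P by (rule psd_carrier)
  have expand: "braket (a \<cdot>\<^sub>v x + b \<cdot>\<^sub>v y) (P *\<^sub>v (a \<cdot>\<^sub>v x + b \<cdot>\<^sub>v y)) =
      cnj a * a * braket x (P *\<^sub>v x) + cnj b * b * braket y (P *\<^sub>v y)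
      + cnj a * b * braket x (P *\<^sub>v y) + cnj b * a * braket y (P *\<^sub>v x)" for a b
  proof -
    have "P *\<^sub>v (a \<cdot>\<^sub>v x + b \<cdot>\<^sub>v y) = a \<cdot>\<^sub>v (P *\<^sub>v x) + b \<cdot>\<^sub>v (P *\<^sub>v y)"
      using Pc x y by (simp add: mult_add_distrib_mat_vec mult_mat_vec)
    then show ?thesis
      using Pc x y by (simp add: braket_linear[of _ n] algebra_simps)
  qed
  define R where "R = Re (braket x (P *\<^sub>v y) + braket y (P *\<^sub>v x))"
  have sum: "qform P (x + y) = qform P x + qform P y + R"
    using expand[of 1 1] by (simp add: qform_def R_def)
  \<comment> \<open>positivity of P on t x - s y controls the cross term R\<close>
  have "0 \<le> qform P (complex_of_real t \<cdot>\<^sub>v x + complex_of_real (- s) \<cdot>\<^sub>v y)"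
    using P x y by (intro psd_qform_nonneg) auto
  also have "\<dots> = t * t * qform P x + s * s * qform P y - s * t * R"
    unfolding qform_def expand R_def by (simp add: algebra_simps)
  finally have cross: "0 \<le> t * t * qform P x + s * s * qform P y - s * t * R" .
  have "(s + t) * (qform P x / s + qform P y / t) - qform P (x + y)
      = (t * t * qform P x + s * s * qform P y - s * t * R) / (s * t)"
    unfolding sum using s t by (simp add: field_simps)
  also have "\<dots> \<ge> 0" using cross s t by simp
  finally show ?thesis by simp
qed

lemma psd_qform_add3_le:
  assumes P: "psd n P" and x: "x0 \<in> carrier_vec n" "x1 \<in> carrier_vec n" "x2 \<in> carrier_vec n"
    and w: "w0 > 0" "w1 > 0" "w2 > 0"
  shows "qform P (x0 + x1 + x2)
    \<le> (w0 + w1 + w2) * (qform P x0 / w0 + qform P x1 / w1 + qform P x2 / w2)"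
proof -
  have "qform P (x0 + x1 + x2) = qform P (x0 + (x1 + x2))"
    using x by (simp add: add.assoc)
  also have "\<dots> \<le> (w0 + (w1 + w2)) * (qform P x0 / w0 + qform P (x1 + x2) / (w1 + w2))"
    using x w by (intro psd_qform_add_le[OF P]) auto
  also have "\<dots> \<le> (w0 + (w1 + w2)) * (qform P x0 / w0 + (qform P x1 / w1 + qform P x2 / w2))"
  proof -
    have "qform P (x1 + x2) \<le> (w1 + w2) * (qform P x1 / w1 + qform P x2 / w2)"
      using x w by (intro psd_qform_add_le[OF P]) auto
    then have "qform P (x1 + x2) / (w1 + w2) \<le> qform P x1 / w1 + qform P x2 / w2"
      using w by (simp add: divide_le_eq mult.commute)
    then show ?thesis using w by (intro mult_left_mono) auto
  qed
  finally show ?thesis by (simp add: add.assoc)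
qed

lemma povm3_qform_sum:
  assumes M: "povm3 n M" and v: "v \<in> carrier_vec n"
  shows "qform (M 0) v + qform (M 1) v + qform (M 2) v = Re (braket v v)"
proof -
  have c: "M i \<in> carrier_mat n n" if "i < 3" for i
    using M that unfolding povm3_def by (auto intro: psd_carrier)
  have "M 0 *\<^sub>v v + M 1 *\<^sub>v v + M 2 *\<^sub>v v = (M 0 + M 1 + M 2) *\<^sub>v v"
    using c[of 0] c[of 1] c[of 2] v
    by (subst add_mult_distrib_mat_vec[of _ n n]) (auto simp: add_mult_distrib_mat_vec)
  also have "\<dots> = v" using M v unfolding povm3_def by simp
  finally have "braket v v = braket v (M 0 *\<^sub>v v + M 1 *\<^sub>v v + M 2 *\<^sub>v v)" by simp
  also have "\<dots> = braket v (M 0 *\<^sub>v v) + braket v (M 1 *\<^sub>v v) + braket v (M 2 *\<^sub>v v)"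
    using c[of 0] c[of 1] c[of 2] v by (simp add: braket_linear[of _ n])
  finally show ?thesis unfolding qform_def by simp
qed

lemma success_uniform3:
  "success (\<lambda>_. 1/3) \<psi> M = (qform (M 0) (\<psi> 0) + qform (M 1) (\<psi> 1) + qform (M 2) (\<psi> 2)) / 3"
proof -
  have "{..<3::nat} = {0, 1, 2}" by auto
  then show ?thesis unfolding success_def qform_def braket_def by simp
qed

section \<open>Rank one projections\<close>

definition ket_bra :: "nat \<Rightarrow> complex vec \<Rightarrow> complex mat" where
  "ket_bra n a = mat n n (\<lambda>(r, s). a $ r * cnj (a $ s))"

lemma ket_bra_carrier [simp]: "ket_bra n a \<in> carrier_mat n n"
  by (simp add: ket_bra_def)

lemma ket_bra_mult_vec:
  assumes "a \<in> carrier_vec n" "v \<in> carrier_vec n"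
  shows "ket_bra n a *\<^sub>v v = braket a v \<cdot>\<^sub>v a"
  using assms
  by (intro eq_vecI)
     (auto simp: ket_bra_def braket_sum[of _ n] scalar_prod_def sum_distrib_left algebra_simps
       intro!: sum.cong)

lemma psd_ket_bra:
  assumes a: "a \<in> carrier_vec n"
  shows "psd n (ket_bra n a)"
  unfolding psd_def
proof (intro conjI allI impI ballI)
  show "ket_bra n a \<in> carrier_mat n n" by simp
  fix i j assume "i < n" "j < n"
  then show "ket_bra n a $$ (i, j) = cnj (ket_bra n a $$ (j, i))" by (simp add: ket_bra_def)
next
  fix v :: "complex vec" assume v: "v \<in> carrier_vec n"
  have "conjugate v \<bullet> (ket_bra n a *\<^sub>v v) = braket a v * cnj (braket a v)"
    using a v by (simp add: ket_bra_mult_vec braket_def[symmetric] braket_smult_right[of _ n]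
        braket_cnj[of v n a])
  also have "\<dots> = complex_of_real ((cmod (braket a v))\<^sup>2)"
    by (rule complex_norm_square[symmetric])
  finally show "0 \<le> Re (conjugate v \<bullet> (ket_bra n a *\<^sub>v v))" by simp
qed

lemma psd_one_minus_ket_bra2:
  assumes a: "a \<in> carrier_vec n" and b: "b \<in> carrier_vec n"
    and orth: "braket a a = 1" "braket b b = 1" "braket a b = 0"
  shows "psd n (1\<^sub>m n - ket_bra n a - ket_bra n b)"
  unfolding psd_def
proof (intro conjI allI impI ballI)
  show "1\<^sub>m n - ket_bra n a - ket_bra n b \<in> carrier_mat n n" by (simp add: minus_carrier_mat)
  fix i j assume "i < n" "j < n"
  then show "(1\<^sub>m n - ket_bra n a - ket_bra n b) $$ (i, j)
      = cnj ((1\<^sub>m n - ket_bra n a - ket_bra n b) $$ (j, i))"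
    by (simp add: ket_bra_def)
next
  fix v :: "complex vec" assume v: "v \<in> carrier_vec n"
  define r where "r = v + (- braket a v) \<cdot>\<^sub>v a + (- braket b v) \<cdot>\<^sub>v b"
  have r_carrier: "r \<in> carrier_vec n" using a b v by (simp add: r_def)
  have "(1\<^sub>m n - ket_bra n a - ket_bra n b) *\<^sub>v v = r"
    using a b v
    by (intro eq_vecI) (auto simp: minus_mult_distrib_mat_vec[of _ n n] minus_carrier_mat ket_bra_mult_vec r_def)
  then have "conjugate v \<bullet> ((1\<^sub>m n - ket_bra n a - ket_bra n b) *\<^sub>v v) = braket v r"
    by (simp add: braket_def)
  \<comment> \<open>r is the component of v orthogonal to a and b\<close>
  also have "\<dots> = braket r r"
  proof -
    have "braket b a = 0" using orth(3) braket_cnj[OF b a] by simp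
    moreover have "braket v a = cnj (braket a v)" "braket v b = cnj (braket b v)"
      using a b v braket_cnj by blast+
    ultimately show ?thesis
      unfolding r_def using a b v by (simp add: braket_linear[of _ n] orth algebra_simps)
  qed
  finally show "0 \<le> Re (conjugate v \<bullet> ((1\<^sub>m n - ket_bra n a - ket_bra n b) *\<^sub>v v))"
    using braket_self_Re_nonneg[OF r_carrier] by simp
qed

section \<open>Equiangular triples of states\<close>

definition \<omega> :: complex where
  "\<omega> = Complex (-1/2) (sqrt 3 / 2)"

lemma omega_sq: "\<omega> * \<omega> = -1 - \<omega>" "\<omega> * (\<omega> * x) = (-1 - \<omega>) * x"
  by (simp_all add: \<omega>_def complex_eq_iff algebra_simps)

lemma cnj_omega: "cnj \<omega> = -1 - \<omega>"
  by (simp add: \<omega>_def complex_eq_iff)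

lemma norm_omega: "cmod \<omega> = 1"
  by (simp add: \<omega>_def cmod_def power_divide)

locale equiangular_triple =
  fixes d :: nat and p0 p1 p2 :: "complex vec" and c :: real
  assumes carrier: "p0 \<in> carrier_vec d" "p1 \<in> carrier_vec d" "p2 \<in> carrier_vec d"
    and gram: "braket p0 p0 = 1" "braket p1 p1 = 1" "braket p2 p2 = 1"
      "braket p0 p1 = of_real c" "braket p1 p0 = of_real c" "braket p0 p2 = of_real c"
      "braket p2 p0 = of_real c" "braket p1 p2 = of_real c" "braket p2 p1 = of_real c"
    and overlap_bounds: "-1/2 < c" "c < 1"
begin

definition F0 :: "complex vec" where "F0 = p0 + p1 + p2"
definition F1 :: "complex vec" where "F1 = p0 + cnj \<omega> \<cdot>\<^sub>v p1 + \<omega> \<cdot>\<^sub>v p2"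
definition F2 :: "complex vec" where "F2 = p0 + \<omega> \<cdot>\<^sub>v p1 + cnj \<omega> \<cdot>\<^sub>v p2"

lemma fourier_carrier: "F0 \<in> carrier_vec d" "F1 \<in> carrier_vec d" "F2 \<in> carrier_vec d"
  using carrier by (auto simp: F0_def F1_def F2_def)

lemma states_fourier:
  "p0 = (1/3) \<cdot>\<^sub>v F0 + (1/3) \<cdot>\<^sub>v F1 + (1/3) \<cdot>\<^sub>v F2"
  "p1 = (1/3) \<cdot>\<^sub>v F0 + (\<omega>/3) \<cdot>\<^sub>v F1 + (cnj \<omega>/3) \<cdot>\<^sub>v F2"
  "p2 = (1/3) \<cdot>\<^sub>v F0 + (cnj \<omega>/3) \<cdot>\<^sub>v F1 + (\<omega>/3) \<cdot>\<^sub>v F2"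
  using carrier
  by (auto intro!: eq_vecI simp: F0_def F1_def F2_def cnj_omega field_simps omega_sq;
      simp add: algebra_simps omega_sq)+

lemma braket_fourier:
  "braket F0 F0 = 3 + 6 * of_real c" "braket F1 F1 = 3 - 3 * of_real c"
  "braket F2 F2 = 3 - 3 * of_real c"
  "braket F0 F1 = 0" "braket F1 F0 = 0" "braket F0 F2 = 0" "braket F2 F0 = 0"
  "braket F1 F2 = 0" "braket F2 F1 = 0"
  using carrier unfolding F0_def F1_def F2_def
  by (simp_all add: braket_linear[of _ d] gram cnj_omega; simp add: algebra_simps omega_sq)+

lemma braket_fourier_states:
  "braket F0 p0 = 1 + 2 * of_real c" "braket F0 p1 = 1 + 2 * of_real c"
  "braket F0 p2 = 1 + 2 * of_real c"
  "braket F1 p0 = 1 - of_real c" "braket F1 p1 = \<omega> * (1 - of_real c)"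
  "braket F1 p2 = cnj \<omega> * (1 - of_real c)"
  "braket F2 p0 = 1 - of_real c" "braket F2 p1 = cnj \<omega> * (1 - of_real c)"
  "braket F2 p2 = \<omega> * (1 - of_real c)"
  using carrier unfolding F0_def F1_def F2_def
  by (simp_all add: braket_linear[of _ d] gram cnj_omega; simp add: algebra_simps omega_sq)+

text \<open>The Gram matrix has eigenvalue 1 + 2c on F0 and 1 - c on F1, F2.\<close>

definition r0 :: real where "r0 = sqrt (1 + 2 * c)"
definition r1 :: real where "r1 = sqrt (1 - c)"

lemma r_pos: "r0 > 0" "r1 > 0"
  using overlap_bounds by (auto simp: r0_def r1_def)

lemma r_sq: "r0\<^sup>2 = 1 + 2 * c" "r1\<^sup>2 = 1 - c"
  using overlap_bounds by (auto simp: r0_def r1_def)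

lemma qform_fourier_lincomb_le:
  assumes P: "psd d P" and coeffs: "cmod a = 1/3" "cmod b = 1/3" "cmod e = 1/3"
  shows "qform P (a \<cdot>\<^sub>v F0 + b \<cdot>\<^sub>v F1 + e \<cdot>\<^sub>v F2)
    \<le> (r0 + 2 * r1) * (qform P F0 / (9 * r0) + qform P F1 / (9 * r1) + qform P F2 / (9 * r1))"
proof -
  have Pc: "P \<in> carrier_mat d d" using P by (rule psd_carrier)
  have "qform P (a \<cdot>\<^sub>v F0 + b \<cdot>\<^sub>v F1 + e \<cdot>\<^sub>v F2)
      \<le> (r0 + r1 + r1) * (qform P (a \<cdot>\<^sub>v F0) / r0 + qform P (b \<cdot>\<^sub>v F1) / r1 + qform P (e \<cdot>\<^sub>v F2) / r1)"
    using fourier_carrier by (intro psd_qform_add3_le[OF P] r_pos) auto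
  also have "\<dots> = (r0 + 2 * r1) * (qform P F0 / (9 * r0) + qform P F1 / (9 * r1) + qform P F2 / (9 * r1))"
    using fourier_carrier coeffs r_pos
    by (simp add: qform_smult[OF Pc] coeffs power2_eq_square field_simps)
  finally show ?thesis .
qed

lemma success_le:
  assumes M: "povm3 d M" and \<psi>: "\<psi> 0 = p0" "\<psi> 1 = p1" "\<psi> 2 = p2"
  shows "success (\<lambda>_. 1/3) \<psi> M \<le> (r0 + 2 * r1)\<^sup>2 / 9"
proof -
  have P: "psd d (M i)" if "i < 3" for i using M that unfolding povm3_def by auto
  define S where
    "S i = qform (M i) F0 / (9 * r0) + qform (M i) F1 / (9 * r1) + qform (M i) F2 / (9 * r1)" for i
  have coeffs: "cmod (1/3) = 1/3" "cmod (\<omega>/3) = 1/3" "cmod (cnj \<omega>/3) = 1/3"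
    using norm_omega by (simp_all add: norm_divide)
  have b0: "qform (M 0) p0 \<le> (r0 + 2 * r1) * S 0"
    unfolding S_def by (subst states_fourier(1)) (intro qform_fourier_lincomb_le P coeffs; simp)
  have b1: "qform (M 1) p1 \<le> (r0 + 2 * r1) * S 1"
    unfolding S_def by (subst states_fourier(2)) (intro qform_fourier_lincomb_le P coeffs; simp)
  have b2: "qform (M 2) p2 \<le> (r0 + 2 * r1) * S 2"
    unfolding S_def by (subst states_fourier(3)) (intro qform_fourier_lincomb_le P coeffs; simp)
  have "S 0 + S 1 + S 2 = (qform (M 0) F0 + qform (M 1) F0 + qform (M 2) F0) / (9 * r0)
      + (qform (M 0) F1 + qform (M 1) F1 + qform (M 2) F1) / (9 * r1)
      + (qform (M 0) F2 + qform (M 1) F2 + qform (M 2) F2) / (9 * r1)"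
    unfolding S_def by (simp add: add_divide_distrib)
  also have "\<dots> = Re (braket F0 F0) / (9 * r0) + Re (braket F1 F1) / (9 * r1) + Re (braket F2 F2) / (9 * r1)"
    using fourier_carrier by (simp only: povm3_qform_sum[OF M])
  also have "\<dots> = 3 * r0\<^sup>2 / (9 * r0) + 3 * r1\<^sup>2 / (9 * r1) + 3 * r1\<^sup>2 / (9 * r1)"
    by (simp add: braket_fourier r_sq)
  also have "\<dots> = (r0 + 2 * r1) / 3"
    using r_pos by (simp add: field_simps power2_eq_square)
  finally have S_sum: "S 0 + S 1 + S 2 = (r0 + 2 * r1) / 3" .
  have "success (\<lambda>_. 1/3) \<psi> M = (qform (M 0) p0 + qform (M 1) p1 + qform (M 2) p2) / 3"
    unfolding success_uniform3 \<psi> ..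
  also have "\<dots> \<le> (r0 + 2 * r1) * (S 0 + S 1 + S 2) / 3"
    using b0 b1 b2 by (simp add: distrib_left)
  also have "\<dots> = (r0 + 2 * r1)\<^sup>2 / 9"
    unfolding S_sum by (simp add: power2_eq_square)
  finally show ?thesis .
qed

definition z0 :: complex where "z0 = complex_of_real r0"
definition z1 :: complex where "z1 = complex_of_real r1"

lemma z_basic: "z0 \<noteq> 0" "z1 \<noteq> 0" "cnj z0 = z0" "cnj z1 = z1" "complex_of_real c = 1 - z1 * z1"
proof -
  show "z0 \<noteq> 0" "z1 \<noteq> 0" "cnj z0 = z0" "cnj z1 = z1"
    using r_pos by (auto simp: z0_def z1_def)
  have "c = 1 - r1 * r1" using r_sq by (simp add: power2_eq_square)
  then have "complex_of_real c = complex_of_real (1 - r1 * r1)" by simp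
  then show "complex_of_real c = 1 - z1 * z1" by (simp add: z1_def)
qed

lemma z0_sq: "z0 * z0 = 3 - 2 * z1 * z1" "z0 * (z0 * x) = (3 - 2 * z1 * z1) * x"
proof -
  have "r0 * r0 = 3 - 2 * r1 * r1" using r_sq by (simp add: power2_eq_square)
  then have "complex_of_real (r0 * r0) = complex_of_real (3 - 2 * r1 * r1)" by simp
  then show "z0 * z0 = 3 - 2 * z1 * z1" by (simp add: z0_def z1_def)
  then show "z0 * (z0 * x) = (3 - 2 * z1 * z1) * x" by (simp add: mult.assoc[symmetric])
qed

text \<open>Square-root measurement vectors: \<phi>k is the Fourier expansion of p_k with the coefficient
  of F_j divided by the square root of the eigenvalue of F_j.\<close>

definition \<phi>1 :: "complex vec" where
  "\<phi>1 = (1 / (3 * z0)) \<cdot>\<^sub>v F0 + (\<omega> / (3 * z1)) \<cdot>\<^sub>v F1 + (cnj \<omega> / (3 * z1)) \<cdot>\<^sub>v F2"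
definition \<phi>2 :: "complex vec" where
  "\<phi>2 = (1 / (3 * z0)) \<cdot>\<^sub>v F0 + (cnj \<omega> / (3 * z1)) \<cdot>\<^sub>v F1 + (\<omega> / (3 * z1)) \<cdot>\<^sub>v F2"

lemma phi_carrier: "\<phi>1 \<in> carrier_vec d" "\<phi>2 \<in> carrier_vec d"
  using fourier_carrier by (auto simp: \<phi>1_def \<phi>2_def)

lemma braket_phi:
  "braket \<phi>1 \<phi>1 = 1" "braket \<phi>2 \<phi>2 = 1" "braket \<phi>1 \<phi>2 = 0"
  "braket \<phi>1 p1 = (z0 + 2 * z1) / 3" "braket \<phi>2 p2 = (z0 + 2 * z1) / 3"
  "braket \<phi>1 p0 = (z0 - z1) / 3" "braket \<phi>2 p0 = (z0 - z1) / 3"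
  unfolding \<phi>1_def \<phi>2_def using fourier_carrier carrier
  by (simp add: braket_linear[of _ d] braket_fourier braket_fourier_states z_basic cnj_omega,
      simp add: field_simps z_basic, simp add: algebra_simps omega_sq z0_sq)+

definition opt_povm :: "nat \<Rightarrow> complex mat" where
  "opt_povm i =
    (if i = 0 then 1\<^sub>m d - ket_bra d \<phi>1 - ket_bra d \<phi>2 else if i = 1 then ket_bra d \<phi>1 else ket_bra d \<phi>2)"

lemma povm3_opt_povm: "povm3 d opt_povm"
  unfolding povm3_def
proof (intro conjI allI impI)
  fix i :: nat assume "i < 3"
  then consider "i = 0" | "i = 1" | "i = 2" by linarith
  then show "psd d (opt_povm i)"
    using phi_carrier braket_phi
    by cases (auto simp: opt_povm_def intro: psd_ket_bra psd_one_minus_ket_bra2)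
next
  show "opt_povm 0 + opt_povm 1 + opt_povm 2 = 1\<^sub>m d"
    by (rule eq_matI) (auto simp: opt_povm_def ket_bra_def)
qed

lemma success_opt_povm:
  assumes \<psi>: "\<psi> 0 = p0" "\<psi> 1 = p1" "\<psi> 2 = p2"
  shows "success (\<lambda>_. 1/3) \<psi> opt_povm = (r0 + 2 * r1)\<^sup>2 / 9"
proof -
  have states_phi: "braket p0 \<phi>1 = (z0 - z1) / 3" "braket p0 \<phi>2 = (z0 - z1) / 3"
    "braket p1 \<phi>1 = (z0 + 2 * z1) / 3" "braket p2 \<phi>2 = (z0 + 2 * z1) / 3"
    using braket_cnj[OF carrier(1) phi_carrier(1)] braket_cnj[OF carrier(1) phi_carrier(2)]
      braket_cnj[OF carrier(2) phi_carrier(1)] braket_cnj[OF carrier(3) phi_carrier(2)]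
    by (simp_all add: braket_phi z_basic)
  have "braket p0 (opt_povm 0 *\<^sub>v p0) = complex_of_real (1 - 2 * ((r0 - r1) / 3)\<^sup>2)"
    unfolding opt_povm_def using phi_carrier carrier
    by (simp add: minus_mult_distrib_mat_vec[of _ d d] minus_carrier_mat ket_bra_mult_vec
        braket_linear[of _ d] braket_phi states_phi gram z0_def z1_def power2_eq_square)
  then have "qform (opt_povm 0) p0 = 1 - 2 * ((r0 - r1) / 3)\<^sup>2"
    unfolding qform_def by simp
  moreover have "qform (opt_povm 1) p1 = ((r0 + 2 * r1) / 3)\<^sup>2"
    unfolding opt_povm_def qform_def using phi_carrier carrier
    by (simp add: ket_bra_mult_vec braket_linear[of _ d] braket_phi states_phi z0_def z1_def
        power2_eq_square)
  moreover have "qform (opt_povm 2) p2 = ((r0 + 2 * r1) / 3)\<^sup>2"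
    unfolding opt_povm_def qform_def using phi_carrier carrier
    by (simp add: ket_bra_mult_vec braket_linear[of _ d] braket_phi states_phi z0_def z1_def
        power2_eq_square)
  moreover have "r0\<^sup>2 + 2 * r1\<^sup>2 = 3" using r_sq by simp
  ultimately show ?thesis
    unfolding success_uniform3 \<psi> by (simp add: power2_eq_square field_simps)
qed

lemma max_success:
  assumes "\<psi> 0 = p0" "\<psi> 1 = p1" "\<psi> 2 = p2"
  shows "(SUP M \<in> {M. povm3 d M}. success (\<lambda>_. 1/3) \<psi> M) = (sqrt (1 + 2 * c) + 2 * sqrt (1 - c))\<^sup>2 / 9"
  unfolding r0_def[symmetric] r1_def[symmetric]
proof (rule cSup_eq_maximum)
  show "(r0 + 2 * r1)\<^sup>2 / 9 \<in> success (\<lambda>_. 1/3) \<psi> ` {M. povm3 d M}"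
    using povm3_opt_povm success_opt_povm[OF assms] by force
  show "x \<le> (r0 + 2 * r1)\<^sup>2 / 9" if "x \<in> success (\<lambda>_. 1/3) \<psi> ` {M. povm3 d M}" for x
    using that success_le[OF _ assms] by auto
qed

end

section \<open>Tensor powers\<close>

lemma binary_digit_add_high:
  assumes "k < N"
  shows "((j + 2 ^ N) div 2 ^ k) mod 2 = (j div 2 ^ k) mod (2::nat)"
proof -
  obtain q where "N = k + Suc q" using assms less_iff_Suc_add by auto
  then have "(2::nat) ^ N = 2 ^ k * (2 * 2 ^ q)" by (simp add: power_add)
  then have "(j + 2 ^ N) div 2 ^ k = j div 2 ^ k + 2 * 2 ^ q"
    by (simp add: div_mult_self2 mult.commute)
  then show ?thesis by simp
qed

lemma sum_prod_binary_digits: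
  fixes g :: "nat \<Rightarrow> 'a::comm_semiring_1"
  shows "(\<Sum>j<2 ^ N. \<Prod>k<N. g ((j div 2 ^ k) mod 2)) = (g 0 + g 1) ^ N"
proof (induction N)
  case 0
  then show ?case by simp
next
  case (Suc N)
  define h where "h j = (\<Prod>k<Suc N. g ((j div 2 ^ k) mod 2))" for j
  let ?m = "2 ^ N :: nat"
  \<comment> \<open>split off the top binary digit\<close>
  have "(\<Sum>j<2 ^ Suc N. h j) = (\<Sum>j\<in>{0..<?m}. h j) + (\<Sum>j\<in>{?m..<?m + ?m}. h j)"
    by (simp add: lessThan_atLeast0 sum.atLeastLessThan_concat mult_2)
  also have "(\<Sum>j\<in>{?m..<?m + ?m}. h j) = (\<Sum>j<?m. h (j + ?m))"
    using sum.shift_bounds_nat_ivl[of h 0 ?m ?m] by (simp add: lessThan_atLeast0)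
  also have "(\<Sum>j<?m. h (j + ?m)) = (\<Sum>j<?m. \<Prod>k<N. g ((j div 2 ^ k) mod 2)) * g 1"
  proof -
    have "(\<Prod>k<N. g (((j + ?m) div 2 ^ k) mod 2)) = (\<Prod>k<N. g ((j div 2 ^ k) mod 2))" for j
      by (rule prod.cong) (auto simp: binary_digit_add_high)
    then show ?thesis by (simp add: h_def sum_distrib_right div_add_self2)
  qed
  also have "(\<Sum>j\<in>{0..<?m}. h j) = (\<Sum>j<?m. \<Prod>k<N. g ((j div 2 ^ k) mod 2)) * g 0"
    by (simp add: h_def atLeast0LessThan sum_distrib_right)
  finally show ?case using Suc by (simp add: h_def algebra_simps)
qed

lemma tensor_pow_carrier: "tensor_pow v N \<in> carrier_vec (2 ^ N)"
  by (simp add: tensor_pow_def)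

lemma braket_tensor_pow:
  assumes "v \<in> carrier_vec 2" "w \<in> carrier_vec 2"
  shows "braket (tensor_pow v N) (tensor_pow w N) = (braket v w) ^ N"
proof -
  have "braket (tensor_pow v N) (tensor_pow w N)
      = (\<Sum>j<2 ^ N. \<Prod>k<N. (\<lambda>b. cnj (v $ b) * w $ b) ((j div 2 ^ k) mod 2))"
    by (simp add: braket_sum[of _ "2 ^ N"] tensor_pow_def prod.distrib)
  also have "\<dots> = (cnj (v $ 0) * w $ 0 + cnj (v $ 1) * w $ 1) ^ N"
    by (rule sum_prod_binary_digits)
  also have "cnj (v $ 0) * w $ 0 + cnj (v $ 1) * w $ 1 = braket v w"
    using assms by (simp add: braket_sum[of _ 2] numeral_2_eq_2 lessThan_Suc)
  finally show ?thesis .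
qed

section \<open>The qubit states\<close>

definition unit_root :: "nat \<Rightarrow> complex" where
  "unit_root N = cis (2 * pi / real N)"

lemma unit_root_pow: "N > 0 \<Longrightarrow> unit_root N ^ N = 1"
  by (simp add: unit_root_def DeMoivre)

lemma cnj_unit_root_mult:
  "cnj (unit_root N) * unit_root N = 1" "unit_root N * cnj (unit_root N) = 1"
  by (simp_all add: unit_root_def cis_cnj cis_mult)

definition real_qubit :: "real \<Rightarrow> real \<Rightarrow> complex vec" where
  "real_qubit a b = vec 2 (\<lambda>i. if i = 0 then complex_of_real a else complex_of_real b)"

lemma real_qubit_carrier [simp]: "real_qubit a b \<in> carrier_vec 2"
  by (simp add: real_qubit_def)

lemma braket_real_qubit: "braket (real_qubit a b) (real_qubit a' b') = complex_of_real (a * a' + b * b')"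
  by (simp add: braket_sum[of _ 2] real_qubit_def numeral_2_eq_2 lessThan_Suc)

lemma Umat_carrier: "Umat N \<in> carrier_mat 2 2"
  by (simp add: Umat_def mat_of_rows_list_def numeral_2_eq_2)

text \<open>Up to the phase -unit_root N, Umat N is the rotation by pi/3.\<close>

lemma Umat_real_qubit:
  "Umat N *\<^sub>v real_qubit a b
    = (- unit_root N) \<cdot>\<^sub>v real_qubit ((a - sqrt 3 * b) / 2) ((sqrt 3 * a + b) / 2)"
  by (intro eq_vecI)
     (auto simp: Umat_def unit_root_def real_qubit_def mat_of_rows_list_def scalar_prod_def
       less_2_cases_iff numeral_2_eq_2 lessThan_Suc field_simps)

lemma Umat_pow_ket0:
  "Umat N ^\<^sub>m 0 *\<^sub>v ket0 = real_qubit 1 0"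
  "Umat N ^\<^sub>m 1 *\<^sub>v ket0 = (- unit_root N) \<cdot>\<^sub>v real_qubit (1/2) (sqrt 3 / 2)"
  "Umat N ^\<^sub>m 2 *\<^sub>v ket0 = (unit_root N * unit_root N) \<cdot>\<^sub>v real_qubit (-1/2) (sqrt 3 / 2)"
proof -
  have ket0: "ket0 = real_qubit 1 0"
    by (auto intro!: eq_vecI simp: ket0_def real_qubit_def)
  have U1: "Umat N *\<^sub>v ket0 = (- unit_root N) \<cdot>\<^sub>v real_qubit (1/2) (sqrt 3 / 2)"
    unfolding ket0 using Umat_real_qubit[of N 1 0] by simp
  have "(1/2 - sqrt 3 * (sqrt 3 / 2)) / 2 = -1/2" "(sqrt 3 * (1/2) + sqrt 3 / 2) / 2 = sqrt 3 / 2"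
    by simp_all
  note U2 = Umat_real_qubit[of N "1/2" "sqrt 3 / 2", unfolded this]
  show "Umat N ^\<^sub>m 0 *\<^sub>v ket0 = real_qubit 1 0"
    using carrier_matD[OF Umat_carrier[of N]] by (simp add: ket0)
  show "Umat N ^\<^sub>m 1 *\<^sub>v ket0 = (- unit_root N) \<cdot>\<^sub>v real_qubit (1/2) (sqrt 3 / 2)"
    using Umat_carrier U1 by (simp add: ket0_def)
  have "Umat N ^\<^sub>m 2 *\<^sub>v ket0 = Umat N *\<^sub>v (Umat N *\<^sub>v ket0)"
    using Umat_carrier[of N] real_qubit_carrier[of 1 0] by (simp add: ket0 numeral_2_eq_2)
  also have "\<dots> = (- unit_root N) \<cdot>\<^sub>v (Umat N *\<^sub>v real_qubit (1/2) (sqrt 3 / 2))"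
    unfolding U1 by (rule mult_mat_vec[OF Umat_carrier real_qubit_carrier])
  finally show "Umat N ^\<^sub>m 2 *\<^sub>v ket0 = (unit_root N * unit_root N) \<cdot>\<^sub>v real_qubit (-1/2) (sqrt 3 / 2)"
    by (simp add: U2 smult_smult_assoc)
qed

lemma power_minus_half_root_of_unity: "z ^ N = 1 \<Longrightarrow> (- (z / 2)) ^ N = (- (1/2) :: complex) ^ N"
proof -
  assume "z ^ N = 1"
  moreover have "- (z / 2) = z * (- (1/2))" by simp
  ultimately show ?thesis by (simp only: power_mult_distrib) simp
qed

lemma equiangular_triple_psi:
  assumes N: "N \<ge> 2"
  shows "equiangular_triple (2 ^ N) (psi N 0) (psi N 1) (psi N 2) ((-1/2) ^ N)"
proof
  let ?u = "unit_root N"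
  have u: "?u ^ N = 1" "cnj ?u ^ N = 1"
    using N unit_root_pow[of N] by (simp_all flip: complex_cnj_power)
  have "\<bar>(-1/2::real) ^ N\<bar> = (1/2) ^ N" by (simp add: power_abs)
  also have "\<dots> \<le> (1/2) ^ 2" by (rule power_decreasing[OF N]) auto
  finally have "\<bar>(-1/2::real) ^ N\<bar> \<le> 1/4" by (simp add: power2_eq_square)
  then show "-1/2 < ((-1/2::real) ^ N)" "((-1/2::real) ^ N) < 1"
    unfolding abs_le_iff by linarith+
  show "psi N 0 \<in> carrier_vec (2 ^ N)" "psi N 1 \<in> carrier_vec (2 ^ N)" "psi N 2 \<in> carrier_vec (2 ^ N)"
    by (simp_all add: psi_def tensor_pow_carrier)
  \<comment> \<open>each overlap of distinct qubits is -1/2 times a root of unity of order N, which the N-th power removes\<close>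
  show "braket (psi N 0) (psi N 0) = 1" "braket (psi N 1) (psi N 1) = 1"
    "braket (psi N 2) (psi N 2) = 1"
    "braket (psi N 0) (psi N 1) = of_real ((-1/2) ^ N)"
    "braket (psi N 1) (psi N 0) = of_real ((-1/2) ^ N)"
    "braket (psi N 0) (psi N 2) = of_real ((-1/2) ^ N)"
    "braket (psi N 2) (psi N 0) = of_real ((-1/2) ^ N)"
    "braket (psi N 1) (psi N 2) = of_real ((-1/2) ^ N)"
    "braket (psi N 2) (psi N 1) = of_real ((-1/2) ^ N)"
    unfolding psi_def Umat_pow_ket0
    by (simp_all add: braket_tensor_pow braket_smult_left[of _ 2] braket_smult_right[of _ 2]
        braket_real_qubit cnj_unit_root_mult mult.assoc[symmetric] power_mult_distrib u)
       (rule power_minus_half_root_of_unity, simp add: power_mult_distrib u)+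

qed

lemma opt_success_psi:
  assumes "N \<ge> 2"
  shows "opt_success N (\<lambda>_. 1/3) (psi N)
    = (sqrt (1 + 2 * (-1/2) ^ N) + 2 * sqrt (1 - (-1/2) ^ N))\<^sup>2 / 9"
proof -
  interpret equiangular_triple "2 ^ N" "psi N 0" "psi N 1" "psi N 2" "(-1/2) ^ N"
    using assms by (rule equiangular_triple_psi)
  show ?thesis
    unfolding opt_success_def
    by (simp add: max_success)
qed

lemma sqrt_mult_sq: "a \<ge> 0 \<Longrightarrow> sqrt (a\<^sup>2 * y) = a * sqrt y"
  by (simp add: real_sqrt_mult)

lemma success_formula_alpha:
  "(sqrt (2/3) * sqrt (1 - (1 + 2 * x) / 3) + sqrt (1/3) * sqrt ((1 + 2 * x) / 3))\<^sup>2
    = (sqrt (1 + 2 * x) + 2 * sqrt (1 - x))\<^sup>2 / 9"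
proof -
  have "sqrt (2/3) * sqrt (1 - (1 + 2 * x) / 3) = sqrt ((2/3)\<^sup>2 * (1 - x))"
    unfolding real_sqrt_mult[symmetric] by (simp add: power2_eq_square field_simps)
  moreover have "sqrt (1/3) * sqrt ((1 + 2 * x) / 3) = sqrt ((1/3)\<^sup>2 * (1 + 2 * x))"
    unfolding real_sqrt_mult[symmetric] by (simp add: power2_eq_square field_simps)
  ultimately show ?thesis
    by (simp only: sqrt_mult_sq) (simp add: power2_eq_square field_simps)
qed

theorem mainTheorem12:
  fixes f :: "nat \<Rightarrow> real" and \<alpha> :: "nat \<Rightarrow> real"
  defines "\<alpha> \<equiv> \<lambda>N. (1 - (- 1 / 2) ^ (N - 1)) / 3"
  defines "f \<equiv> \<lambda>N. (sqrt (2/3) * sqrt (1 - \<alpha> N) + sqrt (1/3) * sqrt (\<alpha> N))\<^sup>2"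
  shows "(\<forall>N\<ge>2. opt_success N (\<lambda>_. 1/3) (psi N) = f N) \<and> f \<longlonglongrightarrow> 1"
proof
  have f_eq: "f N = (sqrt (1 + 2 * (-1/2) ^ N) + 2 * sqrt (1 - (-1/2) ^ N))\<^sup>2 / 9"
    if "N \<ge> 1" for N
  proof -
    have "\<alpha> N = (1 + 2 * (-1/2) ^ N) / 3"
      using that by (cases N) (simp_all add: \<alpha>_def)
    then show ?thesis unfolding f_def by (simp only: success_formula_alpha)
  qed
  show "\<forall>N\<ge>2. opt_success N (\<lambda>_. 1/3) (psi N) = f N"
    by (simp add: opt_success_psi f_eq)
  have "(\<lambda>N. (sqrt (1 + 2 * (-1/2) ^ N) + 2 * sqrt (1 - (-1/2) ^ N))\<^sup>2 / 9)
      \<longlonglongrightarrow> (sqrt (1 + 2 * 0) + 2 * sqrt (1 - 0))\<^sup>2 / 9"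
    by (intro tendsto_intros) simp_all
  then have "(\<lambda>N. (sqrt (1 + 2 * (-1/2) ^ N) + 2 * sqrt (1 - (-1/2) ^ N))\<^sup>2 / 9) \<longlonglongrightarrow> 1"
    by simp
  then show "f \<longlonglongrightarrow> 1"
    by (rule Lim_transform_eventually) (intro eventually_sequentiallyI[of 1], simp add: f_eq)
qed

end
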